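(* If $G\subset\Sigma_n$ does not act isotypically on $\{1,\dots,n\}$, then $|\Pi_n|^G$ is $W_{\Sigma_n}(G)$-equivariantly collapsible.
   Context: $\Pi_n$ is the poset of proper nontrivial partitions of $\{1,\dots,n\}$ ordered by refinement; $|\Pi_n|$ is the realisation of its order complex, with the induced $\Sigma_n$-action, and $|\Pi_n|^G$ its $G$-fixed points with action of $W_{\Sigma_n}(G)=N_{\Sigma_n}(G)/G$. $G$ acts isotypically if all $G$-orbits on $\{1,\dots,n\}$ are isomorphic $G$-sets. Equivariantly collapsible means reducible to a point by finitely many elementary equivariant collapses. *)

theory Defs
  imports "HOL-Algebra.Sym_Groups" "HOL-Algebra.Group_Action" "HOL-Library.Disjoint_Sets"
begin

definition refines :: "nat set set \<Rightarrow> nat set set \<Rightarrow> bool" where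
  "refines P Q \<longleftrightarrow> (\<forall>B\<in>P. \<exists>C\<in>Q. B \<subseteq> C)"

definition Pi_poset :: "nat \<Rightarrow> nat set set set" where
  "Pi_poset n = {P. partition_on {1..n} P \<and> P \<noteq> {{1..n}} \<and> P \<noteq> (\<lambda>i. {i}) ` {1..n}}"

definition perm_part :: "(nat \<Rightarrow> nat) \<Rightarrow> nat set set \<Rightarrow> nat set set" where
  "perm_part g P = (\<lambda>B. g ` B) ` P"

definition perm_simplex :: "(nat \<Rightarrow> nat) \<Rightarrow> nat set set set \<Rightarrow> nat set set set" where
  "perm_simplex g s = perm_part g ` s"

definition is_chain :: "nat set set set \<Rightarrow> bool" where
  "is_chain s \<longleftrightarrow> (\<forall>P\<in>s. \<forall>Q\<in>s. refines P Q \<or> refines Q P)"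

text \<open>The simplicial complex |Pi_n|^G: the fixed points of the order complex of Pi_n, i.e. the
  (nonempty, finite) chains of Pi_n all of whose members are G-fixed (a G-invariant chain is
  fixed pointwise since G acts by order automorphisms).\<close>

definition fixed_order_complex :: "nat \<Rightarrow> (nat \<Rightarrow> nat) set \<Rightarrow> nat set set set set" where
  "fixed_order_complex n G =
     {s. s \<noteq> {} \<and> finite s \<and> s \<subseteq> Pi_poset n \<and> is_chain s \<and>
         (\<forall>g\<in>G. \<forall>P\<in>s. perm_part g P = P)}"

definition perm_orbit :: "(nat \<Rightarrow> nat) set \<Rightarrow> nat \<Rightarrow> nat set" where
  "perm_orbit G i = {g i | g. g \<in> G}"

definition iso_Gsets :: "(nat \<Rightarrow> nat) set \<Rightarrow> nat set \<Rightarrow> nat set \<Rightarrow> bool" where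
  "iso_Gsets G X Y \<longleftrightarrow>
     (\<exists>f. bij_betw f X Y \<and> (\<forall>g\<in>G. \<forall>x\<in>X. f (g x) = g (f x)))"

definition acts_isotypically :: "nat \<Rightarrow> (nat \<Rightarrow> nat) set \<Rightarrow> bool" where
  "acts_isotypically n G \<longleftrightarrow>
     (\<forall>i\<in>{1..n}. \<forall>j\<in>{1..n}. iso_Gsets G (perm_orbit G i) (perm_orbit G j))"

definition weyl_group :: "nat \<Rightarrow> (nat \<Rightarrow> nat) set \<Rightarrow> (nat \<Rightarrow> nat) set monoid" where
  "weyl_group n G =
     ((sym_group n)\<lparr>carrier := normalizer (sym_group n) G\<rparr>) Mod G"

text \<open>W(G)-orbit of a simplex: a coset C in W acts through any of its representatives g in C
  (G acts trivially on the fixed-point complex).\<close>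

definition weyl_orbit :: "nat \<Rightarrow> (nat \<Rightarrow> nat) set \<Rightarrow> nat set set set \<Rightarrow> nat set set set set" where
  "weyl_orbit n G s = {perm_simplex g s | g. \<exists>C\<in>carrier (weyl_group n G). g \<in> C}"

text \<open>Elementary W-equivariant collapse: remove the W-orbits of a free face sigma and of its
  unique proper coface tau (dim tau = dim sigma + 1), where no translate of sigma other than
  sigma itself lies in tau (so the removed pairs are disjoint).\<close>

definition elem_equiv_collapse ::
  "nat \<Rightarrow> (nat \<Rightarrow> nat) set \<Rightarrow> nat set set set set \<Rightarrow> nat set set set set \<Rightarrow> bool" where
  "elem_equiv_collapse n G K K' \<longleftrightarrow>
     (\<exists>\<sigma> \<tau>. \<tau> \<in> K \<and> \<sigma> \<subset> \<tau> \<and> card \<tau> = card \<sigma> + 1 \<and>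
        (\<forall>\<rho>\<in>K. \<sigma> \<subset> \<rho> \<longrightarrow> \<rho> = \<tau>) \<and>
        (\<forall>\<sigma>'\<in>weyl_orbit n G \<sigma>. \<sigma>' \<subseteq> \<tau> \<longrightarrow> \<sigma>' = \<sigma>) \<and>
        K' = K - (weyl_orbit n G \<sigma> \<union> weyl_orbit n G \<tau>))"

definition equiv_collapsible :: "nat \<Rightarrow> (nat \<Rightarrow> nat) set \<Rightarrow> nat set set set set \<Rightarrow> bool" where
  "equiv_collapsible n G K \<longleftrightarrow>
     (\<exists>v. (elem_equiv_collapse n G)\<^sup>*\<^sup>* K {{v}})"

end

(* The G-fixed points of the order complex of Pi_n form the order complex of the poset of
   G-fixed proper nontrivial partitions, on which the Weyl group acts through the normalizer N of G.
   If G is not isotypic, the partition P0 of {1..n} into isotypic classes (i ~ j iff the G-orbits of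
   i and j are isomorphic G-sets) lies in this poset and is N-invariant. Moreover the meet of any
   fixed partition Q with P0 stays in the poset: if it were discrete, every block of Q would meet each
   isotypic class at most once, so all points of a block would have the stabilizer of the block,
   hence isomorphic orbits, forcing Q itself to be discrete.
   An order complex with an invariant vertex p and an equivariant meet with p collapses
   equivariantly to p. The orbit of a vertex v whose link is a cone with apex c can be removed by
   collapses that pair each simplex through a translate g v with the simplex obtained by adding
   g c. First the vertices not below p are removed, minimal ones first, with apex v meet p; then the
   remaining vertices, with apex p. *)

theory Submission
  imports Defs "HOL-Algebra.Zassenhaus"
begin

section \<open>Equivariant collapses of order complexes\<close>

definition order_complex :: "('a \<Rightarrow> 'a \<Rightarrow> bool) \<Rightarrow> 'a set \<Rightarrow> 'a set set" where
  "order_complex leq X = {s. s \<noteq> {} \<and> finite s \<and> s \<subseteq> X \<and> (\<forall>x\<in>s. \<forall>y\<in>s. leq x y \<or> leq y x)}"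

definition simplex_orbit :: "('a \<Rightarrow> 'a) set \<Rightarrow> 'a set \<Rightarrow> 'a set set" where
  "simplex_orbit F s = {f ` s | f. f \<in> F}"

definition vertex_orbit :: "('a \<Rightarrow> 'a) set \<Rightarrow> 'a \<Rightarrow> 'a set" where
  "vertex_orbit F v = {f v | f. f \<in> F}"

definition equiv_collapse :: "('a \<Rightarrow> 'a) set \<Rightarrow> 'a set set \<Rightarrow> 'a set set \<Rightarrow> bool" where
  "equiv_collapse F K K' \<longleftrightarrow> (\<exists>\<sigma> \<tau>. \<tau> \<in> K \<and> \<sigma> \<subset> \<tau> \<and> card \<tau> = card \<sigma> + 1 \<and>
     (\<forall>\<rho>\<in>K. \<sigma> \<subset> \<rho> \<longrightarrow> \<rho> = \<tau>) \<and> (\<forall>\<sigma>'\<in>simplex_orbit F \<sigma>. \<sigma>' \<subseteq> \<tau> \<longrightarrow> \<sigma>' = \<sigma>) \<and>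
     K' = K - (simplex_orbit F \<sigma> \<union> simplex_orbit F \<tau>))"

lemma order_complex_singleton: "leq p p \<Longrightarrow> order_complex leq {p} = {{p}}"
  unfolding order_complex_def by (auto simp: subset_singleton_iff)

lemma finite_order_complex: "finite X \<Longrightarrow> finite (order_complex leq X)"
  by (rule finite_subset[rotated, OF finite_Pow_iff[THEN iffD2]]) (auto simp: order_complex_def)

lemma insert_eq_cases:
  assumes "x \<notin> A" and "insert x s = A \<or> insert x s = insert x A"
  shows "s = A \<or> s = insert x A"
  using assms(2)
proof
  assume "insert x s = A"
  then have "x \<in> A" by (metis insertI1)
  then show ?thesis using assms(1) by contradiction
next
  assume eq: "insert x s = insert x A"
  show ?thesis
  proof (cases "x \<in> s")
    case True
    then show ?thesis using eq by (simp add: insert_absorb)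
  next
    case False
    then show ?thesis using insert_ident[OF False assms(1)] eq by simp
  qed
qed

text \<open>F is a group of order automorphisms given by functions; requiring left inverses suffices,
  as they make every element injective.\<close>

locale poset_action =
  fixes leq :: "'a \<Rightarrow> 'a \<Rightarrow> bool" and X :: "'a set" and F :: "('a \<Rightarrow> 'a) set"
  assumes finite_carrier: "finite X"
    and reflexive: "x \<in> X \<Longrightarrow> leq x x"
    and transitive: "x \<in> X \<Longrightarrow> y \<in> X \<Longrightarrow> z \<in> X \<Longrightarrow> leq x y \<Longrightarrow> leq y z \<Longrightarrow> leq x z"
    and antisymmetric: "x \<in> X \<Longrightarrow> y \<in> X \<Longrightarrow> leq x y \<Longrightarrow> leq y x \<Longrightarrow> x = y"
    and action_closed: "f \<in> F \<Longrightarrow> x \<in> X \<Longrightarrow> f x \<in> X"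
    and action_mono: "f \<in> F \<Longrightarrow> x \<in> X \<Longrightarrow> y \<in> X \<Longrightarrow> leq x y \<Longrightarrow> leq (f x) (f y)"
    and id_in_action: "id \<in> F"
    and comp_in_action: "f \<in> F \<Longrightarrow> h \<in> F \<Longrightarrow> f \<circ> h \<in> F"
    and left_inverse_in_action: "f \<in> F \<Longrightarrow> \<exists>k\<in>F. k \<circ> f = id"
begin

abbreviation comparable :: "'a \<Rightarrow> 'a \<Rightarrow> bool" where
  "comparable x y \<equiv> leq x y \<or> leq y x"

lemma inj_action:
  assumes "f \<in> F" shows "inj f"
proof -
  obtain k where "k \<circ> f = id" using left_inverse_in_action assms by blast
  then show ?thesis by (intro inj_on_inverseI[where g = k]) (simp add: pointfree_idE)
qed

lemma inverse_in_action:
  assumes "f \<in> F"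
  obtains k where "k \<in> F" "k \<circ> f = id" "f \<circ> k = id"
proof -
  obtain k where k: "k \<in> F" "k \<circ> f = id" using left_inverse_in_action assms by blast
  have "f \<circ> k = id"
  proof
    fix x
    have "k (f (k x)) = k x" using pointfree_idE[OF k(2)] .
    then have "f (k x) = x" by (rule injD[OF inj_action[OF k(1)]])
    then show "(f \<circ> k) x = id x" by simp
  qed
  with k show ?thesis by (rule that)
qed

lemma action_reflects:
  assumes "f \<in> F" "x \<in> X" "y \<in> X" "leq (f x) (f y)"
  shows "leq x y"
proof -
  obtain k where k: "k \<in> F" "k \<circ> f = id" using left_inverse_in_action assms(1) by blast
  have "leq (k (f x)) (k (f y))" using action_mono[OF k(1)] action_closed assms by blast
  then show ?thesis using k(2) by (simp add: pointfree_idE)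
qed

lemma action_comparable:
  assumes "f \<in> F" "x \<in> X" "y \<in> X" "comparable x y"
  shows "comparable (f x) (f y)"
  using assms(4)
proof
  assume "leq x y"
  then have "leq (f x) (f y)" by (rule action_mono[OF assms(1,2,3)])
  then show ?thesis by (rule disjI1)
next
  assume "leq y x"
  then have "leq (f y) (f x)" by (rule action_mono[OF assms(1,3,2)])
  then show ?thesis by (rule disjI2)
qed

lemma vertex_orbit_self: "v \<in> vertex_orbit F v"
proof -
  have "v = id v" by simp
  then show ?thesis unfolding vertex_orbit_def using id_in_action by blast
qed

lemma simplex_orbit_self: "s \<in> simplex_orbit F s"
proof -
  have "s = id ` s" by simp
  then show ?thesis unfolding simplex_orbit_def using id_in_action by blast
qed

lemma vertex_orbit_action:
  assumes "f \<in> F" "x \<in> vertex_orbit F v"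
  shows "f x \<in> vertex_orbit F v"
proof -
  obtain h where "h \<in> F" "x = h v" using assms(2) unfolding vertex_orbit_def by blast
  then have "f x = (f \<circ> h) v" "f \<circ> h \<in> F" using comp_in_action assms(1) by auto
  then show ?thesis unfolding vertex_orbit_def by blast
qed

lemma vertex_orbit_action_iff:
  assumes "f \<in> F"
  shows "f x \<in> vertex_orbit F v \<longleftrightarrow> x \<in> vertex_orbit F v"
proof
  assume "f x \<in> vertex_orbit F v"
  moreover obtain k where "k \<in> F" "k \<circ> f = id" using left_inverse_in_action assms by blast
  ultimately show "x \<in> vertex_orbit F v"
    using vertex_orbit_action[of k "f x"] by (simp add: pointfree_idE)
qed (rule vertex_orbit_action[OF assms])

text \<open>The up-set of x is mapped into itself, hence onto itself since X is finite.\<close>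

lemma le_image_eq:
  assumes f: "f \<in> F" and x: "x \<in> X" and le: "leq x (f x)"
  shows "f x = x"
proof -
  define up where "up = {y\<in>X. leq x y}"
  have fx: "f x \<in> X" using action_closed f x by blast
  have "f ` up \<subseteq> up"
  proof
    fix z assume "z \<in> f ` up"
    then obtain y where y: "y \<in> X" "leq x y" "z = f y" unfolding up_def by blast
    have "leq (f x) (f y)" using action_mono[OF f x y(1) y(2)] .
    then show "z \<in> up" using transitive[OF x fx] le y action_closed[OF f] unfolding up_def by blast
  qed
  moreover have "finite up" using finite_carrier unfolding up_def by simp
  ultimately have "f ` up = up"
    using endo_inj_surj inj_on_subset[OF inj_action[OF f]] by blast
  moreover have "x \<in> up" using x reflexive unfolding up_def by blast
  ultimately obtain y where y: "y \<in> X" "leq x y" "x = f y" unfolding up_def by blast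
  then have "leq (f x) x" using action_mono[OF f x y(1) y(2)] by simp
  then show ?thesis using antisymmetric[OF fx x] le by blast
qed

lemma comparable_image_eq:
  assumes f: "f \<in> F" and x: "x \<in> X" and c: "comparable x (f x)"
  shows "f x = x"
  using c
proof
  assume "leq (f x) x"
  obtain k where k: "k \<in> F" "k \<circ> f = id" using left_inverse_in_action f by blast
  then have "leq x (k x)" using action_mono[OF k(1) _ x \<open>leq (f x) x\<close>] action_closed f x
    by (metis comp_apply id_apply)
  then have "k x = k (f x)" using le_image_eq[OF k(1) x] k(2) by (metis comp_apply id_apply)
  then show ?thesis using inj_action[OF k(1)] by (metis injD)
qed (use le_image_eq[OF f x] in blast)

lemma orbit_comparable_eq:
  assumes "f \<in> F" "h \<in> F" "v \<in> X" "comparable (f v) (h v)"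
  shows "f v = h v"
proof -
  obtain k where k: "k \<in> F" "k \<circ> f = id" using left_inverse_in_action assms(1) by blast
  have "(h \<circ> k) (f v) = h v" using k(2) by (metis comp_apply id_apply)
  then show ?thesis
    using comparable_image_eq[OF comp_in_action[OF assms(2) k(1)]] action_closed assms by metis
qed

lemma invariant_Diff_vertex_orbit:
  assumes "\<And>f x. f \<in> F \<Longrightarrow> x \<in> U \<Longrightarrow> f x \<in> U" "f \<in> F" "x \<in> U - vertex_orbit F v"
  shows "f x \<in> U - vertex_orbit F v"
  using assms vertex_orbit_action_iff by blast

lemma card_Diff_vertex_orbit_less:
  assumes "U \<subseteq> X" "v \<in> U"
  shows "card (U - vertex_orbit F v) < card U"
  using finite_subset[OF assms(1) finite_carrier] assms(2) vertex_orbit_self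
  by (intro psubset_card_mono) blast+

end

locale vertex_cone = poset_action +
  fixes U :: "'a set" and v c :: 'a
  assumes subset_carrier: "U \<subseteq> X"
    and invariant: "f \<in> F \<Longrightarrow> x \<in> U \<Longrightarrow> f x \<in> U"
    and vertex_in: "v \<in> U"
    and apex_in: "c \<in> U"
    and apex_ne: "c \<noteq> v"
    and apex_stable: "f \<in> F \<Longrightarrow> g \<in> F \<Longrightarrow> f v = g v \<Longrightarrow> f c = g c"
    and link_cone: "q \<in> U \<Longrightarrow> comparable q v \<Longrightarrow> comparable q c"
begin

definition coned :: "'a set set \<Rightarrow> bool" where
  "coned K \<longleftrightarrow> (\<forall>s\<in>K. \<forall>g\<in>F. g v \<in> s \<longrightarrow> insert (g c) s \<in> K)"

lemma coned_order_complex: "coned (order_complex leq U)"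
  unfolding coned_def
proof (intro ballI impI)
  fix s g assume s: "s \<in> order_complex leq U" and g: "g \<in> F" and gv: "g v \<in> s"
  obtain k where k: "k \<in> F" "k \<circ> g = id" "g \<circ> k = id" using inverse_in_action g by blast
  have sU: "s \<subseteq> U" and chain: "\<forall>x\<in>s. \<forall>y\<in>s. comparable x y"
    using s unfolding order_complex_def by blast+
  have X: "U \<subseteq> X" "c \<in> X" "v \<in> X" using subset_carrier apex_in vertex_in by blast+
  have "comparable q (g c)" if q: "q \<in> s" for q
  proof -
    have qU: "q \<in> U" using sU q by blast
    have kq: "k q \<in> U" using invariant[OF k(1) qU] .
    have "comparable (k q) (k (g v))"
      using action_comparable[OF k(1)] chain q gv qU sU X(1) by blast
    then have "comparable (k q) c" using link_cone[OF kq] k(2) by (simp add: pointfree_idE)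
    then have "comparable (g (k q)) (g c)" using action_comparable[OF g] kq X by blast
    then show ?thesis using k(3) by (simp add: pointfree_idE)
  qed
  moreover have "g c \<in> U" using invariant[OF g apex_in] .
  moreover have "comparable (g c) (g c)" using reflexive action_closed[OF g X(2)] by blast
  moreover have "finite s" "s \<noteq> {}" using s unfolding order_complex_def by blast+
  ultimately show "insert (g c) s \<in> order_complex leq U"
    using sU chain unfolding order_complex_def by auto
qed

lemma translate_apex_ne_vertex: "g \<in> F \<Longrightarrow> g c \<noteq> g v"
  using inj_action apex_ne by (metis injD)

context
  fixes K :: "'a set set" and \<tau> :: "'a set" and f :: "'a \<Rightarrow> 'a"
  assumes coned: "coned K"
    and complex: "K \<subseteq> order_complex leq U"
    and simplex_in: "\<tau> \<in> K"
    and translate_in: "f \<in> F"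
    and translate_vertex_in: "f v \<in> \<tau>"
    and maximal: "\<And>\<rho>. \<rho> \<in> K \<Longrightarrow> \<rho> \<inter> vertex_orbit F v \<noteq> {} \<Longrightarrow> \<tau> \<subseteq> \<rho> \<Longrightarrow> \<rho> = \<tau>"
begin

lemma translate_vertex_orbit: "f v \<in> vertex_orbit F v"
  unfolding vertex_orbit_def using translate_in by blast

lemma translate_vertex_in_face: "f v \<in> \<tau> - {f c}"
  using translate_vertex_in translate_apex_ne_vertex[OF translate_in] by auto

lemma translate_apex_in: "f c \<in> \<tau>"
proof -
  have "insert (f c) \<tau> \<in> K" using coned simplex_in translate_in translate_vertex_in
    unfolding coned_def by blast
  then have "insert (f c) \<tau> = \<tau>"
    using maximal translate_vertex_in translate_vertex_orbit by blast
  then show ?thesis by blast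
qed

lemma free_face:
  assumes "\<rho> \<in> K" "\<tau> - {f c} \<subset> \<rho>"
  shows "\<rho> = \<tau>"
proof -
  have "f v \<in> \<rho>" using assms(2) translate_vertex_in_face by blast
  then have "insert (f c) \<rho> \<in> K" using coned assms(1) translate_in unfolding coned_def by blast
  moreover have "\<tau> \<subseteq> insert (f c) \<rho>" using assms(2) by blast
  ultimately have "insert (f c) \<rho> = \<tau>"
    using maximal \<open>f v \<in> \<rho>\<close> translate_vertex_orbit by blast
  then show ?thesis using assms(2) by blast
qed

lemma translate_apex_notin_face: "h \<in> F \<Longrightarrow> h (f c) \<notin> h ` (\<tau> - {f c})"
  by (simp add: inj_image_mem_iff[OF inj_action])

text \<open>A translate of the face fixing f v also fixes the apex f c, which the face does not contain.\<close>

lemma translate_face_eq: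
  assumes h: "h \<in> F" and sub: "h ` (\<tau> - {f c}) \<subseteq> \<tau>"
  shows "h ` (\<tau> - {f c}) = \<tau> - {f c}"
proof -
  have \<tau>: "finite \<tau>" "\<tau> \<subseteq> U" "\<forall>x\<in>\<tau>. \<forall>y\<in>\<tau>. comparable x y"
    using complex simplex_in unfolding order_complex_def by blast+
  have "comparable (f v) (h (f v))" using sub translate_vertex_in_face \<tau>(3) translate_vertex_in by blast
  then have "h (f v) = f v"
    using comparable_image_eq[OF h] translate_vertex_in \<tau>(2) subset_carrier by blast
  then have "h (f c) = f c"
    using apex_stable[OF comp_in_action[OF h translate_in] translate_in] by simp
  then have "f c \<notin> h ` (\<tau> - {f c})" using translate_apex_notin_face[OF h] by simp
  then have "h ` (\<tau> - {f c}) \<subseteq> \<tau> - {f c}" using sub by blast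
  then show ?thesis
    using endo_inj_surj \<tau>(1) inj_on_subset[OF inj_action[OF h]] by blast
qed

lemma equiv_collapse_maximal:
  "equiv_collapse F K (K - (simplex_orbit F (\<tau> - {f c}) \<union> simplex_orbit F \<tau>))"
  unfolding equiv_collapse_def
proof (intro exI conjI)
  have "finite \<tau>" using complex simplex_in unfolding order_complex_def by blast
  then show "card \<tau> = card (\<tau> - {f c}) + 1"
    using card.remove[OF _ translate_apex_in] by simp
  show "\<tau> - {f c} \<subset> \<tau>" using translate_apex_in by blast
  show "\<forall>\<rho>\<in>K. \<tau> - {f c} \<subset> \<rho> \<longrightarrow> \<rho> = \<tau>" using free_face by blast
  show "\<forall>\<sigma>'\<in>simplex_orbit F (\<tau> - {f c}). \<sigma>' \<subseteq> \<tau> \<longrightarrow> \<sigma>' = \<tau> - {f c}"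
    using translate_face_eq unfolding simplex_orbit_def by blast
qed (use simplex_in in simp_all)

lemma coned_collapse: "coned (K - (simplex_orbit F (\<tau> - {f c}) \<union> simplex_orbit F \<tau>))"
  unfolding coned_def
proof (intro ballI impI)
  define \<sigma> where "\<sigma> = \<tau> - {f c}"
  fix s g assume s: "s \<in> K - (simplex_orbit F \<sigma> \<union> simplex_orbit F \<tau>)" and g: "g \<in> F" and gv: "g v \<in> s"
  have ins: "insert (g c) s \<in> K" using coned s g gv unfolding coned_def by blast
  show "insert (g c) s \<in> K - (simplex_orbit F \<sigma> \<union> simplex_orbit F \<tau>)"
  proof (rule ccontr)
    assume "\<not> ?thesis"
    then obtain h where h: "h \<in> F" "insert (g c) s = h ` \<sigma> \<or> insert (g c) s = h ` \<tau>"
      using ins unfolding simplex_orbit_def by blast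
    have hf: "h \<circ> f \<in> F" using comp_in_action[OF h(1) translate_in] .
    have "h (f v) \<in> h ` \<sigma>" using translate_vertex_in_face \<sigma>_def by simp
    then have "h (f v) \<in> insert (g c) s" using h(2) \<sigma>_def by auto
    moreover have "insert (g c) s \<in> order_complex leq U" using ins complex by blast
    ultimately have "comparable (g v) ((h \<circ> f) v)" using gv unfolding order_complex_def by auto
    then have "g v = (h \<circ> f) v"
      using orbit_comparable_eq[OF g hf] vertex_in subset_carrier by blast
    then have gc: "g c = h (f c)" using apex_stable[OF g hf] by simp
    have "g c \<notin> h ` \<sigma>" using translate_apex_notin_face[OF h(1)] gc \<sigma>_def by simp
    moreover have h\<tau>: "h ` \<tau> = insert (g c) (h ` \<sigma>)"
      using insert_Diff[OF translate_apex_in] gc \<sigma>_def by (metis image_insert)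
    ultimately have "s = h ` \<sigma> \<or> s = insert (g c) (h ` \<sigma>)"
      using insert_eq_cases h(2) by metis
    then have "s = h ` \<sigma> \<or> s = h ` \<tau>" using h\<tau> by simp
    then show False using s h(1) unfolding simplex_orbit_def by blast
  qed
qed


lemma translates_meet_orbit:
  assumes "\<rho> \<in> simplex_orbit F (\<tau> - {f c}) \<union> simplex_orbit F \<tau>"
  shows "\<rho> \<inter> vertex_orbit F v \<noteq> {}"
proof -
  obtain h where h: "h \<in> F" "\<rho> = h ` (\<tau> - {f c}) \<or> \<rho> = h ` \<tau>"
    using assms unfolding simplex_orbit_def by blast
  have "h (f v) \<in> \<rho>" using h(2) translate_vertex_in_face by blast
  moreover have "h (f v) \<in> vertex_orbit F v"
    using vertex_orbit_action[OF h(1) translate_vertex_orbit] .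
  ultimately show ?thesis by blast
qed

end

lemma collapse_coned:
  assumes "finite K" "order_complex leq (U - vertex_orbit F v) \<subseteq> K" "K \<subseteq> order_complex leq U" "coned K"
  shows "(equiv_collapse F)\<^sup>*\<^sup>* K (order_complex leq (U - vertex_orbit F v))"
  using assms
proof (induction K rule: finite_psubset_induct)
  case (psubset K)
  let ?O = "vertex_orbit F v"
  let ?T = "order_complex leq (U - ?O)"
  define B where "B = {s\<in>K. s \<inter> ?O \<noteq> {}}"
  show ?case
  proof (cases "B = {}")
    case True
    have "s \<in> ?T" if "s \<in> K" for s
    proof -
      have "s \<in> order_complex leq U" "s \<inter> ?O = {}" using that True psubset.prems(2) B_def by auto
      then show ?thesis by (auto simp: order_complex_def)
    qed
    then have "K = ?T" using psubset.prems(1) by blast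
    then show ?thesis by simp
  next
    case False
    have "finite B" using finite_subset[of B K] psubset.hyps(1) unfolding B_def by blast
    then obtain \<tau> where \<tau>: "\<tau> \<in> B" and maximal: "\<forall>\<rho>\<in>B. \<tau> \<subseteq> \<rho> \<longrightarrow> \<tau> = \<rho>"
      using finite_has_maximal False by blast
    obtain f where f: "f \<in> F" "f v \<in> \<tau>" using \<tau> unfolding B_def vertex_orbit_def by blast
    define K' where "K' = K - (simplex_orbit F (\<tau> - {f c}) \<union> simplex_orbit F \<tau>)"
    have \<tau>K: "\<tau> \<in> K" and max': "\<And>\<rho>. \<rho> \<in> K \<Longrightarrow> \<rho> \<inter> ?O \<noteq> {} \<Longrightarrow> \<tau> \<subseteq> \<rho> \<Longrightarrow> \<rho> = \<tau>"
      using \<tau> maximal unfolding B_def by auto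
    note maximal_simplex = psubset.prems(3,2) \<tau>K f max'
    have "K' \<subset> K" using \<tau>K simplex_orbit_self unfolding K'_def by blast
    moreover have "?T \<subseteq> K'"
      using psubset.prems(1) translates_meet_orbit[OF maximal_simplex]
      unfolding K'_def order_complex_def by blast
    moreover have "K' \<subseteq> order_complex leq U" using psubset.prems(2) unfolding K'_def by blast
    moreover have "coned K'" using coned_collapse[OF maximal_simplex] unfolding K'_def .
    ultimately have "(equiv_collapse F)\<^sup>*\<^sup>* K' ?T" by (rule psubset.IH)
    moreover have "equiv_collapse F K K'"
      using equiv_collapse_maximal[OF maximal_simplex] unfolding K'_def .
    ultimately show ?thesis by (simp add: converse_rtranclp_into_rtranclp)
  qed
qed

lemma collapse_vertex_orbit:
  "(equiv_collapse F)\<^sup>*\<^sup>* (order_complex leq U) (order_complex leq (U - vertex_orbit F v))"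
proof (rule collapse_coned)
  show "finite (order_complex leq U)"
    using finite_order_complex finite_subset[OF subset_carrier finite_carrier] by blast
  show "order_complex leq (U - vertex_orbit F v) \<subseteq> order_complex leq U"
    by (auto simp: order_complex_def)
qed (rule order_refl, rule coned_order_complex)

end

context poset_action
begin

lemma exists_minimal:
  assumes "A \<subseteq> X" "A \<noteq> {}"
  obtains a where "a \<in> A" "\<And>b. b \<in> A \<Longrightarrow> leq b a \<Longrightarrow> b = a"
proof -
  have "finite A" using finite_subset[OF assms(1) finite_carrier] .
  from this assms(2,1) have "\<exists>a\<in>A. \<forall>b\<in>A. leq b a \<longrightarrow> b = a"
  proof (induction A rule: finite_ne_induct)
    case (insert x A)
    then obtain m where m: "m \<in> A" "\<forall>b\<in>A. leq b m \<longrightarrow> b = m" by blast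
    have X: "x \<in> X" "m \<in> X" "A \<subseteq> X" using insert.prems m(1) by auto
    show ?case
    proof (cases "leq x m")
      case True
      have "b = x" if "b \<in> insert x A" "leq b x" for b
      proof (cases "b = x")
        case False
        then have "b \<in> A" using that(1) by blast
        then have "b = m" using m(2) transitive[of b x m] that(2) True X by blast
        then show ?thesis using antisymmetric[of m x] that(2) True X by blast
      qed
      then show ?thesis by blast
    next
      case False
      then show ?thesis using m by blast
    qed
  qed simp
  then show ?thesis using that by blast
qed

end

locale fixed_point_meet = poset_action +
  fixes p :: 'a and meet :: "'a \<Rightarrow> 'a"
  assumes point_in: "p \<in> X"
    and point_fixed: "f \<in> F \<Longrightarrow> f p = p"
    and meet_in: "x \<in> X \<Longrightarrow> meet x \<in> X"
    and meet_le_left: "x \<in> X \<Longrightarrow> leq (meet x) x"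
    and meet_le_right: "x \<in> X \<Longrightarrow> leq (meet x) p"
    and le_meet: "x \<in> X \<Longrightarrow> y \<in> X \<Longrightarrow> leq y x \<Longrightarrow> leq y p \<Longrightarrow> leq y (meet x)"
    and meet_equivariant: "f \<in> F \<Longrightarrow> x \<in> X \<Longrightarrow> f (meet x) = meet (f x)"
begin

lemma point_notin_vertex_orbit:
  assumes "v \<noteq> p"
  shows "p \<notin> vertex_orbit F v"
proof
  assume "p \<in> vertex_orbit F v"
  then obtain f where f: "f \<in> F" "p = f v" unfolding vertex_orbit_def by blast
  obtain k where k: "k \<in> F" "k \<circ> f = id" using inverse_in_action f(1) by blast
  have "v = k p" using f(2) pointfree_idE[OF k(2)] by simp
  then show False using point_fixed[OF k(1)] assms by simp
qed

lemma vertex_orbit_not_le_point: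
  assumes "v \<in> X" "\<not> leq v p" "x \<in> vertex_orbit F v"
  shows "\<not> leq x p"
proof
  assume "leq x p"
  obtain f where f: "f \<in> F" "x = f v" using assms(3) unfolding vertex_orbit_def by blast
  then have "leq (f v) (f p)" using \<open>leq x p\<close> point_fixed[OF f(1)] by simp
  then show False using action_reflects[OF f(1) assms(1) point_in] assms(2) by blast
qed

lemma vertex_cone_point:
  assumes "U \<subseteq> X" "\<And>f x. f \<in> F \<Longrightarrow> x \<in> U \<Longrightarrow> f x \<in> U" "p \<in> U" "\<forall>x\<in>U. leq x p"
    and "v \<in> U" "v \<noteq> p"
  shows "vertex_cone leq X F U v p"
proof -
  have "f p = g p" if "f \<in> F" "g \<in> F" for f g
    using point_fixed[OF that(1)] point_fixed[OF that(2)] by simp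
  then show ?thesis using assms by unfold_locales auto
qed

lemma collapse_below_point:
  assumes "U \<subseteq> X" "\<And>f x. f \<in> F \<Longrightarrow> x \<in> U \<Longrightarrow> f x \<in> U" "p \<in> U" "\<forall>x\<in>U. leq x p"
  shows "(equiv_collapse F)\<^sup>*\<^sup>* (order_complex leq U) {{p}}"
  using assms
proof (induction "card U" arbitrary: U rule: less_induct)
  case less
  show ?case
  proof (cases "U = {p}")
    case True
    then show ?thesis using order_complex_singleton[of leq p, OF reflexive[OF point_in]] by simp
  next
    case False
    then obtain v where v: "v \<in> U" "v \<noteq> p" using less.prems(3) by blast
    let ?U' = "U - vertex_orbit F v"
    have "?U' \<subseteq> X" "p \<in> ?U'" "\<forall>x\<in>?U'. leq x p"
      using less.prems point_notin_vertex_orbit[OF v(2)] by blast+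
    moreover have "\<And>f x. f \<in> F \<Longrightarrow> x \<in> ?U' \<Longrightarrow> f x \<in> ?U'"
      using invariant_Diff_vertex_orbit less.prems(2) by blast
    ultimately have "(equiv_collapse F)\<^sup>*\<^sup>* (order_complex leq ?U') {{p}}"
      using less.hyps card_Diff_vertex_orbit_less[OF less.prems(1) v(1)] by blast
    moreover have "vertex_cone leq X F U v p"
      by (rule vertex_cone_point[OF less.prems(1) _ less.prems(3,4) v]) (fact less.prems(2))
    then have "(equiv_collapse F)\<^sup>*\<^sup>* (order_complex leq U) (order_complex leq ?U')"
      by (rule vertex_cone.collapse_vertex_orbit)
    ultimately show ?thesis by (rule rtranclp_trans[rotated])
  qed
qed

text \<open>By minimality every vertex below v lies below p, hence below meet v.\<close>

lemma vertex_cone_meet: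
  assumes U: "U \<subseteq> X" "\<And>f x. f \<in> F \<Longrightarrow> x \<in> U \<Longrightarrow> f x \<in> U" "{x\<in>X. leq x p} \<subseteq> U"
    and v: "v \<in> U" "\<not> leq v p"
    and minimal: "\<And>q. q \<in> U \<Longrightarrow> \<not> leq q p \<Longrightarrow> leq q v \<Longrightarrow> q = v"
  shows "vertex_cone leq X F U v (meet v)"
proof -
  have vX: "v \<in> X" using v(1) U(1) by blast
  have link: "comparable q (meet v)" if "q \<in> U" "comparable q v" for q
  proof -
    have qX: "q \<in> X" using that(1) U(1) by blast
    show ?thesis
    proof (cases "leq v q")
      case True
      then show ?thesis using transitive[OF meet_in[OF vX] vX qX] meet_le_left[OF vX] by blast
    next
      case False
      then have "leq q v" "q \<noteq> v" using that(2) reflexive[OF vX] by blast+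
      then have "leq q p" using minimal that(1) by blast
      then show ?thesis using le_meet[OF vX qX \<open>leq q v\<close>] by blast
    qed
  qed
  have "f (meet v) = g (meet v)" if "f \<in> F" "g \<in> F" "f v = g v" for f g
    using meet_equivariant[OF that(1) vX] meet_equivariant[OF that(2) vX] that(3) by simp
  moreover have "meet v \<in> U" "meet v \<noteq> v"
    using U(3) meet_in[OF vX] meet_le_right[OF vX] v(2) by auto
  ultimately show ?thesis using U(1,2) v(1) link by unfold_locales auto
qed

lemma collapse_not_below_point:
  assumes "U \<subseteq> X" "\<And>f x. f \<in> F \<Longrightarrow> x \<in> U \<Longrightarrow> f x \<in> U" "{x\<in>X. leq x p} \<subseteq> U"
  shows "(equiv_collapse F)\<^sup>*\<^sup>* (order_complex leq U) (order_complex leq {x\<in>X. leq x p})"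
  using assms
proof (induction "card U" arbitrary: U rule: less_induct)
  case less
  show ?case
  proof (cases "\<forall>x\<in>U. leq x p")
    case True
    then have "U = {x\<in>X. leq x p}" using less.prems(1,3) by blast
    then show ?thesis by simp
  next
    case False
    obtain v where "v \<in> {x\<in>U. \<not> leq x p}"
      and minimal: "\<And>q. q \<in> {x\<in>U. \<not> leq x p} \<Longrightarrow> leq q v \<Longrightarrow> q = v"
      by (rule exists_minimal[of "{x\<in>U. \<not> leq x p}"]) (use False less.prems(1) in auto)
    then have v: "v \<in> U" "\<not> leq v p" by auto
    have vX: "v \<in> X" using v(1) less.prems(1) by blast
    let ?U' = "U - vertex_orbit F v"
    have "?U' \<subseteq> X" "{x\<in>X. leq x p} \<subseteq> ?U'"
      using less.prems(1,3) vertex_orbit_not_le_point[OF vX v(2)] by blast+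
    moreover have "\<And>f x. f \<in> F \<Longrightarrow> x \<in> ?U' \<Longrightarrow> f x \<in> ?U'"
      using invariant_Diff_vertex_orbit less.prems(2) by blast
    ultimately have "(equiv_collapse F)\<^sup>*\<^sup>* (order_complex leq ?U') (order_complex leq {x\<in>X. leq x p})"
      using less.hyps card_Diff_vertex_orbit_less[OF less.prems(1) v(1)] by blast
    moreover have "vertex_cone leq X F U v (meet v)"
      by (rule vertex_cone_meet[OF less.prems(1) _ less.prems(3) v]) (fact less.prems(2), use minimal in blast)
    then have "(equiv_collapse F)\<^sup>*\<^sup>* (order_complex leq U) (order_complex leq ?U')"
      by (rule vertex_cone.collapse_vertex_orbit)
    ultimately show ?thesis by (rule rtranclp_trans[rotated])
  qed
qed

lemma collapse_to_point: "(equiv_collapse F)\<^sup>*\<^sup>* (order_complex leq X) {{p}}"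
proof -
  have "(equiv_collapse F)\<^sup>*\<^sup>* (order_complex leq X) (order_complex leq {x\<in>X. leq x p})"
    by (rule collapse_not_below_point) (use action_closed in auto)
  moreover have "f x \<in> {x\<in>X. leq x p}" if "f \<in> F" "x \<in> {x\<in>X. leq x p}" for f x
  proof -
    have "x \<in> X" "leq x p" using that(2) by auto
    then have "leq (f x) (f p)" by (rule action_mono[OF that(1) _ point_in])
    then show ?thesis using action_closed[OF that(1) \<open>x \<in> X\<close>] point_fixed[OF that(1)] by simp
  qed
  then have "(equiv_collapse F)\<^sup>*\<^sup>* (order_complex leq {x\<in>X. leq x p}) {{p}}"
    by (intro collapse_below_point) (use point_in reflexive[OF point_in] in auto)
  ultimately show ?thesis by (rule rtranclp_trans)
qed

end

section \<open>Permutations acting on partitions\<close>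

lemma sym_subgroup_permutes: "subgroup H (sym_group n) \<Longrightarrow> h \<in> H \<Longrightarrow> h permutes {1..n}"
  using subgroup.subset sym_group_carrier by blast

lemma sym_subgroup_id: "subgroup H (sym_group n) \<Longrightarrow> id \<in> H"
  using subgroup.one_closed by (fastforce simp: sym_group_one)

lemma sym_subgroup_comp: "subgroup H (sym_group n) \<Longrightarrow> g \<in> H \<Longrightarrow> h \<in> H \<Longrightarrow> g \<circ> h \<in> H"
  using subgroup.m_closed by (fastforce simp: sym_group_mult)

lemma sym_subgroup_inv:
  assumes "subgroup H (sym_group n)" "h \<in> H"
  shows "inv' h \<in> H"
proof -
  have "inv\<^bsub>sym_group n\<^esub> h \<in> H" by (rule subgroup.m_inv_closed[OF assms])
  moreover have "h \<in> carrier (sym_group n)" using subgroup.subset[OF assms(1)] assms(2) by blast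
  ultimately show ?thesis by simp
qed

lemma subgroup_sym_normalizer:
  "subgroup G (sym_group n) \<Longrightarrow> subgroup (normalizer (sym_group n) G) (sym_group n)"
  using group.normalizer_imp_subgroup[OF sym_group_is_group] subgroup.subset by blast

lemma subset_sym_normalizer: "subgroup G (sym_group n) \<Longrightarrow> G \<subseteq> normalizer (sym_group n) G"
  using group.subgroup_in_normalizer[OF sym_group_is_group] normal_imp_subgroup subgroup.subset
  by fastforce

lemma sym_normalizer_conj:
  assumes G: "subgroup G (sym_group n)" and g: "g \<in> normalizer (sym_group n) G" and h: "h \<in> G"
  shows "g \<circ> h \<circ> inv' g \<in> G"
proof -
  have gc: "g \<in> carrier (sym_group n)" using g subgroup_sym_normalizer[OF G] subgroup.subset by blast
  have "g <#\<^bsub>sym_group n\<^esub> G #>\<^bsub>sym_group n\<^esub> inv\<^bsub>sym_group n\<^esub> g = G"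
    using g subgroup.subset[OF G] unfolding normalizer_def stabilizer_def by auto
  then have "g <#\<^bsub>sym_group n\<^esub> G #>\<^bsub>sym_group n\<^esub> inv' g = G" using gc by simp
  then show ?thesis using h unfolding l_coset_def r_coset_def by (auto simp: sym_group_mult)
qed

lemma sym_normalizer_conj_inv:
  assumes G: "subgroup G (sym_group n)" and g: "g \<in> normalizer (sym_group n) G" and h: "h \<in> G"
  shows "inv' g \<circ> h \<circ> g \<in> G"
proof -
  have N: "subgroup (normalizer (sym_group n) G) (sym_group n)" by (rule subgroup_sym_normalizer[OF G])
  have "inv' g \<circ> h \<circ> inv' (inv' g) \<in> G"
    using sym_normalizer_conj[OF G sym_subgroup_inv[OF N g] h] .
  then show ?thesis using permutes_inv_inv[OF sym_subgroup_permutes[OF N g]] by simp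
qed

lemma weyl_group_representatives:
  assumes G: "subgroup G (sym_group n)"
  shows "{g. \<exists>C\<in>carrier (weyl_group n G). g \<in> C} = normalizer (sym_group n) G"
proof -
  define N where "N = normalizer (sym_group n) G"
  have N: "subgroup N (sym_group n)" "G \<subseteq> N"
    unfolding N_def using subgroup_sym_normalizer[OF G] subset_sym_normalizer[OF G] by auto
  have "r_coset (sym_group n\<lparr>carrier := N\<rparr>) G x = {h \<circ> x | h. h \<in> G}" for x
    unfolding r_coset_def by (auto simp: sym_group_def)
  then have car: "carrier (weyl_group n G) = (\<lambda>x. {h \<circ> x | h. h \<in> G}) ` N"
    unfolding weyl_group_def carrier_FactGroup N_def[symmetric] by simp
  have "g \<in> {h \<circ> g | h. h \<in> G}" for g
    using sym_subgroup_id[OF G] by (metis (mono_tags, lifting) comp_id id_comp mem_Collect_eq)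
  moreover have "h \<circ> x \<in> N" if "x \<in> N" "h \<in> G" for h x
    using sym_subgroup_comp[OF N(1)] N(2) that by blast
  ultimately show ?thesis unfolding car N_def[symmetric] by blast
qed

lemma perm_part_id: "perm_part id = id"
  by (rule ext) (simp add: perm_part_def)

lemma perm_part_comp: "perm_part (f \<circ> g) = perm_part f \<circ> perm_part g"
  by (rule ext) (simp add: perm_part_def image_image image_comp)

lemma perm_part_inv: "g permutes S \<Longrightarrow> perm_part (inv' g) \<circ> perm_part g = id"
  by (simp add: perm_part_comp[symmetric] permutes_inv_o(2) perm_part_id)

lemma inj_perm_part: "g permutes S \<Longrightarrow> inj (perm_part g)"
  using perm_part_inv by (metis inj_on_inverseI pointfree_idE)

lemma refines_perm_part:
  assumes "refines P Q" shows "refines (perm_part g P) (perm_part g Q)"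
  unfolding refines_def
proof
  fix B' assume "B' \<in> perm_part g P"
  then obtain B where B: "B \<in> P" "B' = g ` B" unfolding perm_part_def by auto
  obtain C where C: "C \<in> Q" "B \<subseteq> C" using assms B(1) unfolding refines_def by auto
  have "g ` C \<in> perm_part g Q" using C(1) unfolding perm_part_def by (rule imageI)
  moreover have "B' \<subseteq> g ` C" using B(2) C(2) by (simp add: image_mono)
  ultimately show "\<exists>C'\<in>perm_part g Q. B' \<subseteq> C'" by blast
qed

lemma partition_on_perm_part:
  assumes g: "g permutes A" and P: "partition_on A P"
  shows "partition_on A (perm_part g P)"
proof -
  have "partition_on (g ` A) ((`) g ` P - {{}})"
    using partition_on_inj_image[OF P, of g] permutes_inj_on[OF g] by blast
  moreover have "(`) g ` P - {{}} = perm_part g P"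
    using partition_onD3[OF P] unfolding perm_part_def by auto
  ultimately show ?thesis using permutes_image[OF g] by simp
qed

lemma perm_part_top: "g permutes A \<Longrightarrow> perm_part g {A} = {A}"
  by (simp add: perm_part_def permutes_image)

lemma perm_part_discrete:
  assumes "g permutes A" shows "perm_part g ((\<lambda>i. {i}) ` A) = (\<lambda>i. {i}) ` A"
proof -
  have "perm_part g ((\<lambda>i. {i}) ` A) = (\<lambda>i. {i}) ` (g ` A)"
    unfolding perm_part_def by (simp add: image_image)
  then show ?thesis using permutes_image[OF assms] by simp
qed

lemma refines_antisym_partition:
  assumes "partition_on A P" "partition_on A Q" "refines P Q" "refines Q P"
  shows "P = Q"
  using Disjoint_Sets.refines_asym[of A P Q] assms
  unfolding Disjoint_Sets.refines_def Defs.refines_def by blast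

definition fixed_partitions :: "nat \<Rightarrow> (nat \<Rightarrow> nat) set \<Rightarrow> nat set set set" where
  "fixed_partitions n G = {P \<in> Pi_poset n. \<forall>g\<in>G. perm_part g P = P}"

lemma fixed_partitionsD:
  assumes "P \<in> fixed_partitions n G"
  shows "partition_on {1..n} P" "P \<noteq> {{1..n}}" "P \<noteq> (\<lambda>i. {i}) ` {1..n}"
    and "g \<in> G \<Longrightarrow> perm_part g P = P"
  using assms unfolding fixed_partitions_def Pi_poset_def by auto

lemma perm_part_fixed_partitions:
  assumes G: "subgroup G (sym_group n)" and g: "g \<in> normalizer (sym_group n) G"
    and P: "P \<in> fixed_partitions n G"
  shows "perm_part g P \<in> fixed_partitions n G"
proof -
  have gp: "g permutes {1..n}"
    using sym_subgroup_permutes[OF subgroup_sym_normalizer[OF G] g] .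
  have inj: "inj (perm_part g)" by (rule inj_perm_part[OF gp])
  have "perm_part g P \<noteq> {{1..n}}"
    using fixed_partitionsD(2)[OF P] perm_part_top[OF gp] injD[OF inj] by metis
  moreover have "perm_part g P \<noteq> (\<lambda>i. {i}) ` {1..n}"
    using fixed_partitionsD(3)[OF P] perm_part_discrete[OF gp] injD[OF inj] by metis
  moreover have "perm_part h (perm_part g P) = perm_part g P" if h: "h \<in> G" for h
  proof -
    have "h \<circ> g = g \<circ> (inv' g \<circ> h \<circ> g)" using permutes_inv_o(1)[OF gp] by (simp add: o_assoc)
    then have "perm_part h (perm_part g P) = perm_part g (perm_part (inv' g \<circ> h \<circ> g) P)"
      by (metis comp_apply perm_part_comp)
    also have "\<dots> = perm_part g P"
      using fixed_partitionsD(4)[OF P sym_normalizer_conj_inv[OF G g h]] by simp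
    finally show ?thesis .
  qed
  moreover have "partition_on {1..n} (perm_part g P)"
    by (rule partition_on_perm_part[OF gp fixed_partitionsD(1)[OF P]])
  ultimately show ?thesis unfolding fixed_partitions_def Pi_poset_def by blast
qed

lemma poset_action_fixed_partitions:
  assumes G: "subgroup G (sym_group n)"
  shows "poset_action refines (fixed_partitions n G) (perm_part ` normalizer (sym_group n) G)"
proof
  let ?N = "normalizer (sym_group n) G"
  have N: "subgroup ?N (sym_group n)" by (rule subgroup_sym_normalizer[OF G])
  have "fixed_partitions n G \<subseteq> Pow (Pow {1..n})"
    using partition_onD1[OF fixed_partitionsD(1)] by blast
  then show "finite (fixed_partitions n G)" by (rule finite_subset) simp
  show "refines x x" for x unfolding refines_def by blast
  show "refines x z" if xy: "refines x y" and yz: "refines y z" for x y z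
    unfolding refines_def
  proof
    fix B assume "B \<in> x"
    then obtain C where "C \<in> y" "B \<subseteq> C" using xy unfolding refines_def by blast
    moreover obtain D where "D \<in> z" "C \<subseteq> D" using yz \<open>C \<in> y\<close> unfolding refines_def by blast
    ultimately show "\<exists>D\<in>z. B \<subseteq> D" by blast
  qed
  show "x = y" if "x \<in> fixed_partitions n G" "y \<in> fixed_partitions n G" "refines x y" "refines y x" for x y
    using refines_antisym_partition[OF fixed_partitionsD(1)[OF that(1)] fixed_partitionsD(1)[OF that(2)] that(3,4)] .
  show "f x \<in> fixed_partitions n G" if "f \<in> perm_part ` ?N" "x \<in> fixed_partitions n G" for f x
    using perm_part_fixed_partitions[OF G _ that(2)] that(1) by blast
  show "refines (f x) (f y)" if "f \<in> perm_part ` ?N" "refines x y" for f x y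
    using refines_perm_part[OF that(2)] that(1) by blast
  show "id \<in> perm_part ` ?N"
    using sym_subgroup_id[OF N] perm_part_id by (metis image_eqI)
  show "f \<circ> h \<in> perm_part ` ?N" if fh: "f \<in> perm_part ` ?N" "h \<in> perm_part ` ?N" for f h
  proof -
    obtain g1 g2 where "g1 \<in> ?N" "g2 \<in> ?N" "f = perm_part g1" "h = perm_part g2" using fh by blast
    then show ?thesis using perm_part_comp[of g1 g2] sym_subgroup_comp[OF N] by (metis image_eqI)
  qed
  show "\<exists>k\<in>perm_part ` ?N. k \<circ> f = id" if f: "f \<in> perm_part ` ?N" for f
  proof -
    obtain g where g: "g \<in> ?N" "f = perm_part g" using f by blast
    then have "perm_part (inv' g) \<circ> f = id" using perm_part_inv[OF sym_subgroup_permutes[OF N g(1)]] by simp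
    then show ?thesis using sym_subgroup_inv[OF N g(1)] by blast
  qed
qed

section \<open>The isotypic partition\<close>

lemma perm_orbit_self:
  assumes "subgroup G (sym_group n)" shows "i \<in> perm_orbit G i"
proof -
  have "i = id i" by simp
  then show ?thesis using sym_subgroup_id[OF assms] unfolding perm_orbit_def by blast
qed

lemma perm_orbit_closed:
  assumes G: "subgroup G (sym_group n)" and g: "g \<in> G" and x: "x \<in> perm_orbit G i"
  shows "g x \<in> perm_orbit G i"
proof -
  obtain h where h: "h \<in> G" "x = h i" using x unfolding perm_orbit_def by blast
  then have "g x = (g \<circ> h) i" "g \<circ> h \<in> G" using sym_subgroup_comp[OF G g] by auto
  then show ?thesis unfolding perm_orbit_def by blast
qed

lemma perm_orbit_eq:
  assumes G: "subgroup G (sym_group n)" and x: "x \<in> perm_orbit G i"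
  shows "perm_orbit G x = perm_orbit G i"
proof
  obtain h where h: "h \<in> G" "x = h i" using x unfolding perm_orbit_def by blast
  show "perm_orbit G x \<subseteq> perm_orbit G i"
    using perm_orbit_closed[OF G _ x] unfolding perm_orbit_def[of G x] by blast
  show "perm_orbit G i \<subseteq> perm_orbit G x"
  proof
    fix y assume "y \<in> perm_orbit G i"
    then obtain g where g: "g \<in> G" "y = g i" unfolding perm_orbit_def by blast
    have "(g \<circ> inv' h) x = y"
      using g h permutes_inverses(2)[OF sym_subgroup_permutes[OF G h(1)]] by simp
    moreover have "g \<circ> inv' h \<in> G" using sym_subgroup_comp[OF G g(1) sym_subgroup_inv[OF G h(1)]] .
    ultimately show "y \<in> perm_orbit G x" unfolding perm_orbit_def by blast
  qed
qed

lemma perm_orbit_subset: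
  assumes G: "subgroup G (sym_group n)" and i: "i \<in> {1..n}"
  shows "perm_orbit G i \<subseteq> {1..n}"
  using permutes_in_image[OF sym_subgroup_permutes[OF G]] i unfolding perm_orbit_def by blast

lemma iso_Gsets_refl: "iso_Gsets G X X"
  unfolding iso_Gsets_def by (rule exI[of _ id]) simp

lemma iso_Gsets_sym:
  assumes inv: "\<forall>g\<in>G. \<forall>x\<in>X. g x \<in> X" and iso: "iso_Gsets G X Y"
  shows "iso_Gsets G Y X"
proof -
  obtain f where f: "bij_betw f X Y" "\<forall>g\<in>G. \<forall>x\<in>X. f (g x) = g (f x)"
    using iso unfolding iso_Gsets_def by blast
  define f' where "f' = inv_into X f"
  have "bij_betw f' Y X" using bij_betw_inv_into[OF f(1)] f'_def by simp
  moreover have "f' (g y) = g (f' y)" if g: "g \<in> G" and y: "y \<in> Y" for g y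
  proof -
    have x: "f' y \<in> X" "f (f' y) = y" using f(1) y f'_def
      by (auto simp: bij_betw_def inv_into_into f_inv_into_f)
    have "g (f' y) \<in> X" using inv g x by blast
    moreover have "f (g (f' y)) = g y" using f(2) g x by auto
    ultimately show "f' (g y) = g (f' y)" using f(1) f'_def by (metis bij_betw_def inv_into_f_f)
  qed
  ultimately show ?thesis unfolding iso_Gsets_def by blast
qed

lemma iso_Gsets_trans:
  assumes "iso_Gsets G X Y" "iso_Gsets G Y Z"
  shows "iso_Gsets G X Z"
proof -
  obtain f where f: "bij_betw f X Y" "\<forall>g\<in>G. \<forall>x\<in>X. f (g x) = g (f x)"
    using assms(1) unfolding iso_Gsets_def by blast
  obtain f2 where f2: "bij_betw f2 Y Z" "\<forall>g\<in>G. \<forall>x\<in>Y. f2 (g x) = g (f2 x)"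
    using assms(2) unfolding iso_Gsets_def by blast
  have "(f2 \<circ> f) (g x) = g ((f2 \<circ> f) x)" if "g \<in> G" "x \<in> X" for g x
    using f(2) f2(2) bij_betwE[OF f(1)] that by simp
  then show ?thesis using bij_betw_trans[OF f(1) f2(1)] unfolding iso_Gsets_def by blast
qed

lemma translates_eq_iff_of_stabilizer_eq:
  assumes G: "subgroup G (sym_group n)" and st: "\<forall>g\<in>G. g i = i \<longleftrightarrow> g j = j"
    and g: "g \<in> G" and h: "h \<in> G"
  shows "g i = h i \<longleftrightarrow> g j = h j"
proof -
  have hp: "h permutes {1..n}" using sym_subgroup_permutes[OF G h] .
  have k: "inv' h \<circ> g \<in> G" using sym_subgroup_comp[OF G sym_subgroup_inv[OF G h] g] .
  have "g i = h i \<longleftrightarrow> (inv' h \<circ> g) i = i"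
    using permutes_inverses[OF hp] by (metis comp_apply)
  also have "\<dots> \<longleftrightarrow> (inv' h \<circ> g) j = j" using st k by blast
  also have "\<dots> \<longleftrightarrow> g j = h j"
    using permutes_inverses[OF hp] by (metis comp_apply)
  finally show ?thesis .
qed

text \<open>The isomorphism is g i \<mapsto> g j.\<close>

lemma iso_Gsets_of_stabilizer_eq:
  assumes G: "subgroup G (sym_group n)" and st: "\<forall>g\<in>G. g i = i \<longleftrightarrow> g j = j"
  shows "iso_Gsets G (perm_orbit G i) (perm_orbit G j)"
proof -
  note key = translates_eq_iff_of_stabilizer_eq[OF G st]
  define f where "f x = (SOME y. \<exists>g\<in>G. x = g i \<and> y = g j)" for x
  have fval: "f (g i) = g j" if g: "g \<in> G" for g
  proof -
    have "\<exists>y. \<exists>g'\<in>G. g i = g' i \<and> y = g' j" using g by blast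
    then have "\<exists>g'\<in>G. g i = g' i \<and> f (g i) = g' j" unfolding f_def by (rule someI_ex)
    then show ?thesis using key g by metis
  qed
  have "inj_on f (perm_orbit G i)"
  proof (rule inj_onI)
    fix x y assume "x \<in> perm_orbit G i" "y \<in> perm_orbit G i" "f x = f y"
    then obtain g h where "g \<in> G" "h \<in> G" "x = g i" "y = h i" "f x = f y"
      unfolding perm_orbit_def by auto
    then show "x = y" using fval key by metis
  qed
  moreover have "f ` perm_orbit G i = perm_orbit G j"
    unfolding perm_orbit_def using fval by (auto simp: image_iff) (metis fval)
  moreover have "f (h x) = h (f x)" if h: "h \<in> G" and x: "x \<in> perm_orbit G i" for h x
  proof -
    obtain g where g: "g \<in> G" "x = g i" using x unfolding perm_orbit_def by auto
    have "f (h x) = f ((h \<circ> g) i)" using g by simp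
    also have "\<dots> = h (f x)" using fval[OF sym_subgroup_comp[OF G h g(1)]] fval[OF g(1)] g by simp
    finally show ?thesis .
  qed
  ultimately show ?thesis unfolding iso_Gsets_def bij_betw_def by blast
qed

definition isotypic_rel :: "nat \<Rightarrow> (nat \<Rightarrow> nat) set \<Rightarrow> (nat \<times> nat) set" where
  "isotypic_rel n G =
     {(i, j). i \<in> {1..n} \<and> j \<in> {1..n} \<and> iso_Gsets G (perm_orbit G i) (perm_orbit G j)}"

definition isotypic_partition :: "nat \<Rightarrow> (nat \<Rightarrow> nat) set \<Rightarrow> nat set set" where
  "isotypic_partition n G = {1..n} // isotypic_rel n G"

lemma equiv_isotypic_rel:
  assumes G: "subgroup G (sym_group n)"
  shows "equiv {1..n} (isotypic_rel n G)"
proof (rule equivI)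
  show "refl_on {1..n} (isotypic_rel n G)"
    unfolding refl_on_def isotypic_rel_def using iso_Gsets_refl by blast
  show "sym (isotypic_rel n G)"
    unfolding sym_def isotypic_rel_def using iso_Gsets_sym perm_orbit_closed[OF G] by blast
  show "trans (isotypic_rel n G)"
    unfolding trans_def isotypic_rel_def using iso_Gsets_trans by blast
qed (auto simp: isotypic_rel_def)

lemma isotypic_rel_same_orbit:
  assumes G: "subgroup G (sym_group n)" and i: "i \<in> {1..n}" and x: "x \<in> perm_orbit G i"
  shows "(i, x) \<in> isotypic_rel n G"
  using i perm_orbit_subset[OF G i] x perm_orbit_eq[OF G x] iso_Gsets_refl
  unfolding isotypic_rel_def by auto

lemma perm_orbit_conj:
  assumes G: "subgroup G (sym_group n)" and g: "g \<in> normalizer (sym_group n) G"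
  shows "perm_orbit G (g i) = g ` perm_orbit G i"
proof
  have gp: "g permutes {1..n}" using sym_subgroup_permutes[OF subgroup_sym_normalizer[OF G] g] .
  show "perm_orbit G (g i) \<subseteq> g ` perm_orbit G i"
  proof
    fix y assume "y \<in> perm_orbit G (g i)"
    then obtain h where h: "h \<in> G" "y = h (g i)" unfolding perm_orbit_def by auto
    have "g ((inv' g \<circ> h \<circ> g) i) = y" using h(2) permutes_inverses(1)[OF gp] by simp
    moreover have "(inv' g \<circ> h \<circ> g) i \<in> perm_orbit G i"
      using sym_normalizer_conj_inv[OF G g h(1)] unfolding perm_orbit_def by blast
    ultimately show "y \<in> g ` perm_orbit G i" by blast
  qed
  show "g ` perm_orbit G i \<subseteq> perm_orbit G (g i)"
  proof
    fix y assume "y \<in> g ` perm_orbit G i"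
    then obtain h where h: "h \<in> G" "y = g (h i)" unfolding perm_orbit_def by auto
    have "(g \<circ> h \<circ> inv' g) (g i) = y" using h(2) permutes_inverses(2)[OF gp] by simp
    then show "y \<in> perm_orbit G (g i)"
      using sym_normalizer_conj[OF G g h(1)] unfolding perm_orbit_def by blast
  qed
qed

lemma iso_Gsets_conj:
  assumes G: "subgroup G (sym_group n)" and g: "g \<in> normalizer (sym_group n) G"
    and iso: "iso_Gsets G (perm_orbit G i) (perm_orbit G j)"
  shows "iso_Gsets G (perm_orbit G (g i)) (perm_orbit G (g j))"
proof -
  have gp: "g permutes {1..n}" using sym_subgroup_permutes[OF subgroup_sym_normalizer[OF G] g] .
  define X where "X = perm_orbit G i"
  define Y where "Y = perm_orbit G j"
  obtain f where f: "bij_betw f X Y" "\<forall>h\<in>G. \<forall>x\<in>X. f (h x) = h (f x)"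
    using iso unfolding iso_Gsets_def X_def Y_def by blast
  have b1: "bij_betw (inv' g) (g ` X) X"
  proof (rule bij_betw_imageI)
    show "inj_on (inv' g) (g ` X)" using permutes_inj_on[OF permutes_inv[OF gp]] .
    show "inv' g ` g ` X = X" using permutes_inverses(2)[OF gp] by (simp add: image_image)
  qed
  have b3: "bij_betw g Y (g ` Y)" using permutes_inj_on[OF gp] by (rule inj_on_imp_bij_betw)
  have "bij_betw (g \<circ> (f \<circ> inv' g)) (g ` X) (g ` Y)"
    using bij_betw_trans[OF bij_betw_trans[OF b1 f(1)] b3] .
  moreover have "(g \<circ> (f \<circ> inv' g)) (h x) = h ((g \<circ> (f \<circ> inv' g)) x)"
    if h: "h \<in> G" and x: "x \<in> g ` X" for h x
  proof -
    obtain x0 where x0: "x0 \<in> X" "x = g x0" using x by blast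
    have k: "inv' g \<circ> h \<circ> g \<in> G" using sym_normalizer_conj_inv[OF G g h] .
    have "(g \<circ> (f \<circ> inv' g)) (h x) = g (f ((inv' g \<circ> h \<circ> g) x0))" using x0 by simp
    also have "\<dots> = g ((inv' g \<circ> h \<circ> g) (f x0))" using f(2) k x0(1) by metis
    also have "\<dots> = h (g (f x0))" using permutes_inverses(1)[OF gp] by simp
    also have "\<dots> = h ((g \<circ> (f \<circ> inv' g)) x)" using x0 permutes_inverses(2)[OF gp] by simp
    finally show ?thesis .
  qed
  moreover have "perm_orbit G (g i) = g ` X" "perm_orbit G (g j) = g ` Y"
    using perm_orbit_conj[OF G g] X_def Y_def by auto
  ultimately show ?thesis unfolding iso_Gsets_def by metis
qed

lemma isotypic_rel_conj:
  assumes G: "subgroup G (sym_group n)" and g: "g \<in> normalizer (sym_group n) G"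
    and ij: "(i, j) \<in> isotypic_rel n G"
  shows "(g i, g j) \<in> isotypic_rel n G"
proof -
  have gp: "g permutes {1..n}" using sym_subgroup_permutes[OF subgroup_sym_normalizer[OF G] g] .
  show ?thesis
    using ij iso_Gsets_conj[OF G g] permutes_in_image[OF gp] unfolding isotypic_rel_def by auto
qed

lemma perm_part_isotypic_partition:
  assumes G: "subgroup G (sym_group n)" and g: "g \<in> normalizer (sym_group n) G"
  shows "perm_part g (isotypic_partition n G) = isotypic_partition n G"
proof -
  define R where "R = isotypic_rel n G"
  have N: "subgroup (normalizer (sym_group n) G) (sym_group n)" by (rule subgroup_sym_normalizer[OF G])
  have gp: "g permutes {1..n}" using sym_subgroup_permutes[OF N g] .
  have image_class: "g ` (R `` {i}) = R `` {g i}" for i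
  proof
    show "g ` (R `` {i}) \<subseteq> R `` {g i}" using isotypic_rel_conj[OF G g] R_def by auto
    show "R `` {g i} \<subseteq> g ` (R `` {i})"
    proof
      fix z assume "z \<in> R `` {g i}"
      then have "(inv' g (g i), inv' g z) \<in> R"
        using isotypic_rel_conj[OF G sym_subgroup_inv[OF N g]] R_def by auto
      then have "(i, inv' g z) \<in> R" using permutes_inverses(2)[OF gp] by simp
      moreover have "z = g (inv' g z)" using permutes_inverses(1)[OF gp] by simp
      ultimately show "z \<in> g ` (R `` {i})" by blast
    qed
  qed
  have "perm_part g (isotypic_partition n G) = (\<lambda>i. g ` (R `` {i})) ` {1..n}"
    unfolding perm_part_def isotypic_partition_def quotient_def R_def by blast
  also have "\<dots> = (\<lambda>i. R `` {i}) ` (g ` {1..n})" unfolding image_class by (simp add: image_image)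
  also have "\<dots> = isotypic_partition n G"
    unfolding permutes_image[OF gp] isotypic_partition_def quotient_def R_def by blast
  finally show ?thesis .
qed

lemma isotypic_class_in_partition:
  "i \<in> {1..n} \<Longrightarrow> isotypic_rel n G `` {i} \<in> isotypic_partition n G"
  unfolding isotypic_partition_def quotient_def by blast

lemma exists_nontrivial_orbit:
  assumes G: "subgroup G (sym_group n)" and "\<not> acts_isotypically n G"
  obtains k x where "k \<in> {1..n}" "x \<in> perm_orbit G k" "x \<noteq> k"
proof -
  obtain i j where ij: "i \<in> {1..n}" "j \<in> {1..n}" "\<not> iso_Gsets G (perm_orbit G i) (perm_orbit G j)"
    using assms(2) unfolding acts_isotypically_def by blast
  have "\<not> (perm_orbit G i = {i} \<and> perm_orbit G j = {j})"
  proof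
    assume fixed: "perm_orbit G i = {i} \<and> perm_orbit G j = {j}"
    then have "g j = j" if "g \<in> G" for g
      using perm_orbit_closed[OF G that perm_orbit_self[OF G, of j]] by simp
    then have "iso_Gsets G {i} {j}"
      unfolding iso_Gsets_def by (intro exI[of _ "\<lambda>_. j"]) (simp add: bij_betw_def eq_commute)
    then show False using ij(3) fixed by simp
  qed
  then show ?thesis using that ij(1,2) perm_orbit_self[OF G] by blast
qed

lemma isotypic_partition_in_fixed_partitions:
  assumes G: "subgroup G (sym_group n)" and nonisotypic: "\<not> acts_isotypically n G"
  shows "isotypic_partition n G \<in> fixed_partitions n G"
proof -
  let ?R = "isotypic_rel n G"
  have part: "partition_on {1..n} (isotypic_partition n G)"
    unfolding isotypic_partition_def by (rule partition_on_quotient[OF equiv_isotypic_rel[OF G]])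
  have "isotypic_partition n G \<noteq> {{1..n}}"
  proof
    assume "isotypic_partition n G = {{1..n}}"
    moreover obtain i j where "i \<in> {1..n}" "j \<in> {1..n}" "(i, j) \<notin> ?R"
      using nonisotypic unfolding acts_isotypically_def isotypic_rel_def by blast
    ultimately show False using isotypic_class_in_partition[of i n G] by auto
  qed
  moreover have "isotypic_partition n G \<noteq> (\<lambda>i. {i}) ` {1..n}"
  proof
    assume discrete: "isotypic_partition n G = (\<lambda>i. {i}) ` {1..n}"
    obtain k x where k: "k \<in> {1..n}" "x \<in> perm_orbit G k" "x \<noteq> k"
      using exists_nontrivial_orbit[OF G nonisotypic] .
    have "x \<in> ?R `` {k}" "k \<in> ?R `` {k}"
      using isotypic_rel_same_orbit[OF G k(1,2)] isotypic_rel_same_orbit[OF G k(1) perm_orbit_self[OF G]]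
      by auto
    moreover obtain m where "?R `` {k} = {m}"
      using isotypic_class_in_partition[OF k(1), of G] discrete by blast
    ultimately show False using k(3) by auto
  qed
  moreover have "perm_part g (isotypic_partition n G) = isotypic_partition n G" if "g \<in> G" for g
    using perm_part_isotypic_partition[OF G] subset_sym_normalizer[OF G] that by blast
  ultimately show ?thesis using part unfolding fixed_partitions_def Pi_poset_def by blast
qed

section \<open>Meets with the isotypic partition\<close>

definition partition_meet :: "'a set set \<Rightarrow> 'a set set \<Rightarrow> 'a set set" where
  "partition_meet P Q = {B \<inter> C | B C. B \<in> P \<and> C \<in> Q \<and> B \<inter> C \<noteq> {}}"

lemma partition_same_block:
  "partition_on A P \<Longrightarrow> B \<in> P \<Longrightarrow> B' \<in> P \<Longrightarrow> x \<in> B \<Longrightarrow> x \<in> B' \<Longrightarrow> B = B'"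
  unfolding partition_on_def disjoint_def by blast

lemma partition_on_meet:
  assumes P: "partition_on A P" and Q: "partition_on A Q"
  shows "partition_on A (partition_meet P Q)"
proof (rule partition_onI)
  show "\<Union> (partition_meet P Q) = A"
  proof
    show "\<Union> (partition_meet P Q) \<subseteq> A" using P unfolding partition_meet_def partition_on_def by blast
    show "A \<subseteq> \<Union> (partition_meet P Q)"
    proof
      fix x assume "x \<in> A"
      then obtain B C where "B \<in> P" "C \<in> Q" "x \<in> B" "x \<in> C" using P Q unfolding partition_on_def by blast
      then show "x \<in> \<Union> (partition_meet P Q)" unfolding partition_meet_def by blast
    qed
  qed
  show "{} \<notin> partition_meet P Q" unfolding partition_meet_def by blast
  fix p q assume p: "p \<in> partition_meet P Q" and q: "q \<in> partition_meet P Q" and pq: "p \<noteq> q"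
  obtain B C where BC: "B \<in> P" "C \<in> Q" "p = B \<inter> C" using p unfolding partition_meet_def by blast
  obtain B' C' where BC': "B' \<in> P" "C' \<in> Q" "q = B' \<inter> C'" using q unfolding partition_meet_def by blast
  show "disjnt p q"
  proof (rule ccontr)
    assume "\<not> disjnt p q"
    then obtain x where "x \<in> p" "x \<in> q" unfolding disjnt_def by blast
    then have "B = B'" "C = C'" using partition_same_block[OF P] partition_same_block[OF Q] BC BC' by blast+
    then show False using pq BC BC' by simp
  qed
qed

lemma refines_meet_left: "refines (partition_meet P Q) P"
  unfolding refines_def partition_meet_def by blast

lemma refines_meet_right: "refines (partition_meet P Q) Q"
  unfolding refines_def partition_meet_def by blast

lemma refines_meet_greatest:
  assumes "{} \<notin> R" "refines R P" "refines R Q"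
  shows "refines R (partition_meet P Q)"
  unfolding refines_def
proof
  fix D assume D: "D \<in> R"
  obtain B where B: "B \<in> P" "D \<subseteq> B" using assms(2) D unfolding refines_def by blast
  obtain C where C: "C \<in> Q" "D \<subseteq> C" using assms(3) D unfolding refines_def by blast
  have "D \<noteq> {}" using assms(1) D by blast
  then have "B \<inter> C \<in> partition_meet P Q" using B C unfolding partition_meet_def by blast
  then show "\<exists>E\<in>partition_meet P Q. D \<subseteq> E" using B C by blast
qed

lemma perm_part_meet:
  assumes g: "inj g"
  shows "perm_part g (partition_meet P Q) = partition_meet (perm_part g P) (perm_part g Q)"
proof
  show "perm_part g (partition_meet P Q) \<subseteq> partition_meet (perm_part g P) (perm_part g Q)"
  proof
    fix X assume "X \<in> perm_part g (partition_meet P Q)"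
    then obtain B C where BC: "B \<in> P" "C \<in> Q" "B \<inter> C \<noteq> {}" "X = g ` (B \<inter> C)"
      unfolding perm_part_def partition_meet_def by blast
    then have "X = g ` B \<inter> g ` C" "g ` B \<inter> g ` C \<noteq> {}" using image_Int[OF g] by auto
    moreover have "g ` B \<in> perm_part g P" "g ` C \<in> perm_part g Q"
      using BC(1,2) unfolding perm_part_def by blast+
    ultimately show "X \<in> partition_meet (perm_part g P) (perm_part g Q)"
      unfolding partition_meet_def by blast
  qed
  show "partition_meet (perm_part g P) (perm_part g Q) \<subseteq> perm_part g (partition_meet P Q)"
  proof
    fix X assume "X \<in> partition_meet (perm_part g P) (perm_part g Q)"
    then obtain B C where BC: "B \<in> P" "C \<in> Q" "g ` B \<inter> g ` C \<noteq> {}" "X = g ` B \<inter> g ` C"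
      unfolding perm_part_def partition_meet_def by blast
    then have "X = g ` (B \<inter> C)" "B \<inter> C \<noteq> {}" using image_Int[OF g] by auto
    moreover have "B \<inter> C \<in> partition_meet P Q" using BC(1,2) \<open>B \<inter> C \<noteq> {}\<close>
      unfolding partition_meet_def by blast
    ultimately show "X \<in> perm_part g (partition_meet P Q)" unfolding perm_part_def by blast
  qed
qed

lemma partition_meet_eq_top:
  assumes P: "partition_on A P" and Q: "partition_on A Q" and top: "partition_meet P Q = {A}"
  shows "Q = {A}"
proof -
  have "A \<in> partition_meet P Q" using top by simp
  then obtain B C where BC: "B \<in> P" "C \<in> Q" "A = B \<inter> C"
    unfolding partition_meet_def by blast
  have "C \<subseteq> A" using BC(2) partition_onD1[OF Q] by blast
  then have CA: "C = A" using BC(3) by blast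
  have "C' = A" if C': "C' \<in> Q" for C'
  proof -
    have "C' \<noteq> {}" using partition_onD3[OF Q] C' by blast
    then obtain x where x: "x \<in> C'" using ex_in_conv[THEN iffD2] by blast
    then have "x \<in> C" using CA partition_onD1[OF Q] C' by blast
    then show ?thesis using partition_same_block[OF Q C' BC(2) x] CA by simp
  qed
  then show ?thesis using BC(2) CA by blast
qed

lemma partition_nondiscrete_block:
  assumes Q: "partition_on A Q" and nondiscrete: "Q \<noteq> (\<lambda>i. {i}) ` A"
  obtains B i j where "B \<in> Q" "i \<in> B" "j \<in> B" "i \<noteq> j"
proof -
  have "\<exists>B\<in>Q. \<exists>i j. i \<in> B \<and> j \<in> B \<and> i \<noteq> j"
  proof (rule ccontr)
    assume "\<not> ?thesis"
    then have single: "B = {x}" if "B \<in> Q" "x \<in> B" for B x using that by blast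
    have "Q = (\<lambda>i. {i}) ` A"
    proof
      show "Q \<subseteq> (\<lambda>i. {i}) ` A"
      proof
        fix B assume B: "B \<in> Q"
        have "B \<noteq> {}" using partition_onD3[OF Q] B by blast
        then obtain x where "x \<in> B" using ex_in_conv[THEN iffD2] by blast
        then show "B \<in> (\<lambda>i. {i}) ` A" using single[OF B] partition_onD1[OF Q] B by blast
      qed
      show "(\<lambda>i. {i}) ` A \<subseteq> Q"
      proof
        fix X assume "X \<in> (\<lambda>i. {i}) ` A"
        then obtain x where "x \<in> A" "X = {x}" by blast
        moreover then obtain B where "B \<in> Q" "x \<in> B" using partition_onD1[OF Q] by blast
        ultimately show "X \<in> Q" using single by blast
      qed
    qed
    then show False using nondiscrete by contradiction
  qed
  then show ?thesis using that by blast
qed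

lemma stable_partition_block_eq:
  assumes Q: "partition_on A Q" and stable: "perm_part g Q = Q"
    and B: "B \<in> Q" and x: "x \<in> B" "g x \<in> B"
  shows "g ` B = B"
proof -
  have "g ` B \<in> Q" using stable B unfolding perm_part_def by blast
  then show ?thesis using partition_same_block[OF Q _ B] x by blast
qed

lemma meet_isotypic_not_discrete:
  assumes G: "subgroup G (sym_group n)" and Q: "Q \<in> fixed_partitions n G"
  shows "partition_meet Q (isotypic_partition n G) \<noteq> (\<lambda>i. {i}) ` {1..n}"
proof
  let ?R = "isotypic_rel n G"
  assume discrete: "partition_meet Q (isotypic_partition n G) = (\<lambda>i. {i}) ` {1..n}"
  note Qp = fixed_partitionsD[OF Q]
  obtain B i j where Bij: "B \<in> Q" "i \<in> B" "j \<in> B" "i \<noteq> j"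
    using partition_nondiscrete_block[OF Qp(1,3)] .
  have Bsub: "B \<subseteq> {1..n}" using partition_onD1[OF Qp(1)] Bij(1) by blast
  have same: "x = y" if "x \<in> B" "y \<in> B" "(x, y) \<in> ?R" for x y
  proof -
    have xn: "x \<in> {1..n}" using Bsub that(1) by blast
    then have "x \<in> ?R `` {x}" using equiv_isotypic_rel[OF G] unfolding equiv_def refl_on_def by blast
    then have "B \<inter> ?R `` {x} \<in> partition_meet Q (isotypic_partition n G)"
      using Bij(1) isotypic_class_in_partition[OF xn] that(1) unfolding partition_meet_def by blast
    then obtain m where "B \<inter> ?R `` {x} = {m}" using discrete by blast
    moreover have "x \<in> B \<inter> ?R `` {x}" "y \<in> B \<inter> ?R `` {x}" using \<open>x \<in> ?R `` {x}\<close> that by auto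
    ultimately show ?thesis by auto
  qed
  have stab: "g x = x \<longleftrightarrow> g ` B = B" if x: "x \<in> B" and g: "g \<in> G" for x g
  proof
    assume "g x = x"
    then show "g ` B = B" using stable_partition_block_eq[OF Qp(1) Qp(4)[OF g] Bij(1) x] x by simp
  next
    assume "g ` B = B"
    then have gx: "g x \<in> B" using x by blast
    have "x \<in> {1..n}" using Bsub x by blast
    then have "(x, g x) \<in> ?R"
      using isotypic_rel_same_orbit[OF G] perm_orbit_closed[OF G g perm_orbit_self[OF G]] by blast
    then show "g x = x" using same[OF x gx] by simp
  qed
  have "\<forall>g\<in>G. g i = i \<longleftrightarrow> g j = j" using stab Bij(2,3) by blast
  then have "(i, j) \<in> ?R"
    using iso_Gsets_of_stabilizer_eq[OF G] Bsub Bij(2,3) unfolding isotypic_rel_def by blast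
  then show False using same Bij(2-4) by blast
qed

lemma partition_meet_isotypic_in_fixed_partitions:
  assumes G: "subgroup G (sym_group n)" and nonisotypic: "\<not> acts_isotypically n G"
    and Q: "Q \<in> fixed_partitions n G"
  shows "partition_meet Q (isotypic_partition n G) \<in> fixed_partitions n G"
proof -
  note P0 = fixed_partitionsD[OF isotypic_partition_in_fixed_partitions[OF G nonisotypic]]
  note Qp = fixed_partitionsD[OF Q]
  have part: "partition_on {1..n} (partition_meet Q (isotypic_partition n G))"
    by (rule partition_on_meet[OF Qp(1) P0(1)])
  moreover have "partition_meet Q (isotypic_partition n G) \<noteq> {{1..n}}"
    using partition_meet_eq_top[OF Qp(1) P0(1)] P0(2) by blast
  moreover have "perm_part g (partition_meet Q (isotypic_partition n G)) = partition_meet Q (isotypic_partition n G)"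
    if g: "g \<in> G" for g
    using perm_part_meet[OF permutes_inj[OF sym_subgroup_permutes[OF G g]]] Qp(4)[OF g] P0(4)[OF g] by simp
  ultimately show ?thesis
    using meet_isotypic_not_discrete[OF G Q] unfolding fixed_partitions_def Pi_poset_def by blast
qed

lemma fixed_point_meet_isotypic:
  assumes G: "subgroup G (sym_group n)" and nonisotypic: "\<not> acts_isotypically n G"
  shows "fixed_point_meet refines (fixed_partitions n G) (perm_part ` normalizer (sym_group n) G)
           (isotypic_partition n G) (\<lambda>Q. partition_meet Q (isotypic_partition n G))"
proof (rule fixed_point_meet.intro[OF poset_action_fixed_partitions[OF G]], unfold_locales)
  let ?P0 = "isotypic_partition n G"
  show "?P0 \<in> fixed_partitions n G" by (rule isotypic_partition_in_fixed_partitions[OF G nonisotypic])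
  show "f ?P0 = ?P0" if "f \<in> perm_part ` normalizer (sym_group n) G" for f
    using that perm_part_isotypic_partition[OF G] by blast
  show "partition_meet Q ?P0 \<in> fixed_partitions n G" if "Q \<in> fixed_partitions n G" for Q
    by (rule partition_meet_isotypic_in_fixed_partitions[OF G nonisotypic that])
  show "refines (partition_meet Q ?P0) Q" for Q by (rule refines_meet_left)
  show "refines (partition_meet Q ?P0) ?P0" for Q by (rule refines_meet_right)
  show "refines R (partition_meet Q ?P0)" if "R \<in> fixed_partitions n G" "refines R Q" "refines R ?P0" for R Q
    using refines_meet_greatest partition_onD3[OF fixed_partitionsD(1)[OF that(1)]] that(2,3) by blast
  show "f (partition_meet Q ?P0) = partition_meet (f Q) ?P0"
    if f: "f \<in> perm_part ` normalizer (sym_group n) G" for f Q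
  proof -
    obtain g where g: "g \<in> normalizer (sym_group n) G" "f = perm_part g" using f by blast
    have "inj g" using permutes_inj[OF sym_subgroup_permutes[OF subgroup_sym_normalizer[OF G] g(1)]] .
    then show ?thesis using perm_part_meet perm_part_isotypic_partition[OF G g(1)] g(2) by simp
  qed
qed

theorem lemma6p3:
  fixes n :: nat and G :: "(nat \<Rightarrow> nat) set"
  assumes "subgroup G (sym_group n)"
    and "\<not> acts_isotypically n G"
  shows "equiv_collapsible n G (fixed_order_complex n G)"
proof -
  let ?W = "perm_part ` normalizer (sym_group n) G"
  interpret fixed_point_meet refines "fixed_partitions n G" ?W "isotypic_partition n G"
      "\<lambda>Q. partition_meet Q (isotypic_partition n G)"
    by (rule fixed_point_meet_isotypic[OF assms])
  have "fixed_order_complex n G = order_complex refines (fixed_partitions n G)"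
    unfolding fixed_order_complex_def order_complex_def fixed_partitions_def is_chain_def by blast
  moreover have "weyl_orbit n G s = simplex_orbit ?W s" for s
    unfolding weyl_orbit_def simplex_orbit_def perm_simplex_def
    using weyl_group_representatives[OF assms(1)] by blast
  then have "elem_equiv_collapse n G = equiv_collapse ?W"
    unfolding elem_equiv_collapse_def equiv_collapse_def by (intro ext) simp
  ultimately show ?thesis
    unfolding equiv_collapsible_def using collapse_to_point by metis
qed

end
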